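(* Let $K$ be a number field and let $\alpha,\beta$ be multiplicatively independent positive rational numbers. Let $F\in K[[x^{\mathbb{R}}]]$ be a Hahn series satisfying nontrivial homogeneous equations $\sum_{i=0}^{d_1}P_i(x)F(x^{\alpha^i})=0$ and $\sum_{i=0}^{d_2}Q_i(x)F(x^{\beta^i})=0$ with $P_i,Q_i\in K[x]$, $P_{d_1}\ne0$, $Q_{d_2}\ne0$. Suppose there are $s,s'\in\mathbb{R}$ with ${}_{\alpha^{\mathbb{Z}}s+\mathbb{Z}[\alpha,\alpha^{-1}]}[F]\ne0$ and ${}_{\beta^{\mathbb{Z}}s'+\mathbb{Z}[\beta,\beta^{-1}]}[F]\ne0$. Then there is a positive integer $n$ such that ${}_{\mathbb{Z}[\alpha,\alpha^{-1}]}[F(x^n)]\ne0$ and ${}_{\mathbb{Z}[\beta,\beta^{-1}]}[F(x^n)]\ne0$.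
   Context: $K[[x^{\mathbb{R}}]]$ is the field of Hahn series $\sum_{i\in\mathbb{R}} f_ix^i$ ($f_i\in K$) with well-ordered support; $F(x^\gamma)=\sum_if_ix^{\gamma i}$. Positive reals are multiplicatively independent if $\log\alpha/\log\beta\notin\mathbb{Q}$. $\gamma^{\mathbb{Z}}s+\mathbb{Z}[\gamma,\gamma^{-1}]=\{\gamma^m s+r: m\in\mathbb{Z}, r\in\mathbb{Z}[\gamma,\gamma^{-1}]\}$, with $\mathbb{Z}[\gamma,\gamma^{-1}]$ the subring of $\mathbb{Q}$ generated by $\gamma^{\pm1}$. For $A\subseteq\mathbb{R}$, ${}_A[G]$ is the Hahn series of the terms of $G$ with exponents in $A$. *)

theory Defs
  imports "HOL-Computational_Algebra.Polynomial" "HOL-Analysis.Analysis"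
begin

definition number_field :: "complex set \<Rightarrow> bool" where
  "number_field K \<longleftrightarrow>
     0 \<in> K \<and> 1 \<in> K \<and>
     (\<forall>x\<in>K. \<forall>y\<in>K. x + y \<in> K \<and> x - y \<in> K \<and> x * y \<in> K) \<and>
     (\<forall>x\<in>K. x \<noteq> 0 \<longrightarrow> inverse x \<in> K) \<and>
     (\<exists>B. finite B \<and> B \<subseteq> K \<and>
        (\<forall>x\<in>K. \<exists>c. (\<forall>b\<in>B. c b \<in> \<rat>) \<and> x = (\<Sum>b\<in>B. c b * b)))"

text \<open>Hahn series with real exponents: coefficient functions with well-ordered support.\<close>
definition hahn_support :: "(real \<Rightarrow> 'a::zero) \<Rightarrow> real set" where
  "hahn_support F = {e. F e \<noteq> 0}"

definition is_hahn_series :: "(real \<Rightarrow> 'a::zero) \<Rightarrow> bool" where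
  "is_hahn_series F \<longleftrightarrow>
     (\<forall>T. T \<subseteq> hahn_support F \<longrightarrow> T \<noteq> {} \<longrightarrow> (\<exists>m\<in>T. \<forall>t\<in>T. m \<le> t))"

text \<open>Substitution F(x^gamma): coefficient of x^e is F_(e/gamma).\<close>
definition hahn_subst :: "(real \<Rightarrow> 'a) \<Rightarrow> real \<Rightarrow> (real \<Rightarrow> 'a)" where
  "hahn_subst F \<gamma> = (\<lambda>e. F (e / \<gamma>))"

definition poly_hahn_mult :: "'a::comm_ring_1 poly \<Rightarrow> (real \<Rightarrow> 'a) \<Rightarrow> (real \<Rightarrow> 'a)" where
  "poly_hahn_mult P G = (\<lambda>e. \<Sum>k\<le>degree P. coeff P k * G (e - real k))"

definition hahn_restrict :: "real set \<Rightarrow> (real \<Rightarrow> 'a::zero) \<Rightarrow> (real \<Rightarrow> 'a)" where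
  "hahn_restrict A G = (\<lambda>e. if e \<in> A then G e else 0)"

definition Zring :: "real \<Rightarrow> real set" where
  "Zring \<gamma> = {(\<Sum>k\<in>{-N..N}. of_int (c k) * \<gamma> powi k) | (N::int) (c::int \<Rightarrow> int). True}"

definition shifted_orbit :: "real \<Rightarrow> real \<Rightarrow> real set" where
  "shifted_orbit \<gamma> s = {\<gamma> powi m * s + r | (m::int) r. r \<in> Zring \<gamma>}"

definition mult_indep :: "real \<Rightarrow> real \<Rightarrow> bool" where
  "mult_indep a b \<longleftrightarrow> a > 0 \<and> b > 0 \<and> ln a / ln b \<notin> \<rat>"

end

theory Submission
  imports Defs
begin

text \<open>If \<open>v\<close>
  is the least exponent of \<open>F\<close>, the \<open>i\<close>-th term \<open>P_i(x) F(x^(\<alpha>^i))\<close> of the equation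
  has least exponent \<open>ord_0 P_i + \<alpha>^i v\<close>. For irrational \<open>v\<close> these numbers are pairwise
  distinct (\<open>\<alpha>\<close> is rational and \<open>\<noteq> 1\<close>), so the smallest of them cannot cancel. Hence
  \<open>v = a/b\<close> is rational, and \<open>F(x^b)\<close> has the nonzero coefficient \<open>F(v)\<close> at the
  integer exponent \<open>a\<close>, which lies in both \<open>\<int>[\<alpha>,1/\<alpha>]\<close> and \<open>\<int>[\<beta>,1/\<beta>]\<close>.\<close>

lemma coeff_less_order_0:
  assumes "p \<noteq> 0" "k < order 0 p"
  shows "coeff p k = 0"
  using assms monom_1_dvd_iff[of p "order 0 p"] monom_1_dvd_iff'[of "order 0 p" p] by simp

lemma coeff_order_0_nonzero:
  assumes "p \<noteq> 0"
  shows "coeff p (order 0 p) \<noteq> 0"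
proof
  assume "coeff p (order 0 p) = 0"
  with coeff_less_order_0[OF assms] have "\<forall>k<Suc (order 0 p). coeff p k = 0"
    using less_Suc_eq by auto
  with assms show False
    using monom_1_dvd_iff[of p "Suc (order 0 p)"] monom_1_dvd_iff'[of "Suc (order 0 p)" p] by simp
qed

lemma order_0_le_coeff_nonzero:
  assumes "coeff p k \<noteq> 0"
  shows "order 0 p \<le> k"
  using assms coeff_less_order_0[of p k] by (metis coeff_0 not_le)

lemma hahn_series_least_exponent:
  assumes "is_hahn_series F" "F e \<noteq> 0"
  obtains v where "F v \<noteq> 0" "\<And>t. F t \<noteq> 0 \<Longrightarrow> v \<le> t"
proof -
  have "hahn_support F \<noteq> {}" using assms(2) by (auto simp: hahn_support_def)
  with assms(1) obtain v where "v \<in> hahn_support F" "\<forall>t\<in>hahn_support F. v \<le> t"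
    unfolding is_hahn_series_def by blast
  with that show ?thesis by (simp add: hahn_support_def)
qed

lemma hahn_subst_lower_bound:
  assumes "\<gamma> > 0" "\<And>t. F t \<noteq> 0 \<Longrightarrow> v \<le> t" "hahn_subst F \<gamma> e \<noteq> 0"
  shows "\<gamma> * v \<le> e"
  using assms pos_le_divide_eq[of \<gamma> v e] by (simp add: hahn_subst_def mult.commute)

lemma poly_hahn_mult_below_order:
  assumes G: "\<And>t. G t \<noteq> 0 \<Longrightarrow> w \<le> t" and e: "e < real (order 0 P) + w"
  shows "poly_hahn_mult P G e = 0"
  unfolding poly_hahn_mult_def
proof (intro sum.neutral ballI)
  fix k
  show "coeff P k * G (e - real k) = 0"
  proof (cases "coeff P k = 0")
    case False
    then have "order 0 P \<le> k" by (rule order_0_le_coeff_nonzero)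
    with e have "e - real k < w" by linarith
    with G have "G (e - real k) = 0" by force
    then show ?thesis by simp
  qed simp
qed

lemma poly_hahn_mult_at_order:
  assumes G: "\<And>t. G t \<noteq> 0 \<Longrightarrow> w \<le> t"
  shows "poly_hahn_mult P G (real (order 0 P) + w) = coeff P (order 0 P) * G w"
proof (cases "P = 0")
  case False
  let ?e = "real (order 0 P) + w"
  have "order 0 P \<le> degree P"
    using coeff_order_0_nonzero[OF False] le_degree by blast
  moreover have "coeff P k * G (?e - real k) = 0" if "k \<noteq> order 0 P" for k
  proof (cases "coeff P k = 0")
    case False
    with that order_0_le_coeff_nonzero have "order 0 P < k" by fastforce
    then have "?e - real k < w" by linarith
    with G have "G (?e - real k) = 0" by force
    then show ?thesis by simp
  qed simp
  ultimately have "(\<Sum>k\<le>degree P. coeff P k * G (?e - real k))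
      = (\<Sum>k\<in>{order 0 P}. coeff P k * G (?e - real k))"
    by (intro sum.mono_neutral_right) auto
  then show ?thesis by (simp add: poly_hahn_mult_def)
qed (simp add: poly_hahn_mult_def)

lemma Rats_if_affine_eq:
  fixes v :: real
  assumes "p \<in> \<rat>" "q \<in> \<rat>" "a \<in> \<rat>" "b \<in> \<rat>" "a \<noteq> b" "p + a * v = q + b * v"
  shows "v \<in> \<rat>"
proof -
  from assms(5,6) have "v = (q - p) / (a - b)" by (simp add: field_simps)
  with assms(1-4) show ?thesis by simp
qed

lemma least_exponent_rational:
  fixes F :: "real \<Rightarrow> 'a::idom" and P :: "nat \<Rightarrow> 'a poly"
  assumes \<alpha>: "\<alpha> \<in> \<rat>" "\<alpha> > 0" "\<alpha> \<noteq> 1"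
    and Fv: "F v \<noteq> 0" and v_least: "\<And>t. F t \<noteq> 0 \<Longrightarrow> v \<le> t"
    and top: "P d \<noteq> 0"
    and eq: "\<forall>e. (\<Sum>i\<le>d. poly_hahn_mult (P i) (hahn_subst F (\<alpha> ^ i)) e) = 0"
  shows "v \<in> \<rat>"
proof (rule ccontr)
  assume v_irrational: "v \<notin> \<rat>"
  define I where "I = {i. i \<le> d \<and> P i \<noteq> 0}"
  define val where "val i = real (order 0 (P i)) + \<alpha> ^ i * v" for i
  define \<mu> where "\<mu> = Min (val ` I)"
  have "finite I" "d \<in> I" using top by (auto simp: I_def)
  then have \<mu>_le: "\<And>i. i \<in> I \<Longrightarrow> \<mu> \<le> val i" and "\<mu> \<in> val ` I"
    unfolding \<mu>_def by (auto intro: Min_in)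
  then obtain i0 where i0: "i0 \<in> I" "val i0 = \<mu>" by auto
  have val_inj: "i = j" if "val i = val j" for i j
  proof (rule ccontr)
    assume "i \<noteq> j"
    have "\<alpha> ^ i \<in> \<rat>" "\<alpha> ^ j \<in> \<rat>" using \<alpha>(1) by (simp_all add: Rats_power)
    moreover have "\<alpha> ^ i \<noteq> \<alpha> ^ j" using \<alpha>(2,3) \<open>i \<noteq> j\<close> by (simp add: power_inject_exp')
    moreover have "real (order 0 (P i)) + \<alpha> ^ i * v = real (order 0 (P j)) + \<alpha> ^ j * v"
      using that by (simp add: val_def)
    ultimately have "v \<in> \<rat>" by (rule Rats_if_affine_eq[OF Rats_of_nat Rats_of_nat])
    with v_irrational show False ..
  qed
  have subst_bound: "\<And>t. hahn_subst F (\<alpha> ^ i) t \<noteq> 0 \<Longrightarrow> \<alpha> ^ i * v \<le> t" for i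
    using \<alpha>(2) v_least by (intro hahn_subst_lower_bound) auto
  have term_vanishes: "poly_hahn_mult (P i) (hahn_subst F (\<alpha> ^ i)) \<mu> = 0"
    if "i \<le> d" "i \<noteq> i0" for i
  proof (cases "P i = 0")
    case False
    with that have "i \<in> I" by (simp add: I_def)
    moreover have "val i \<noteq> val i0" using val_inj that(2) by blast
    ultimately have "\<mu> < val i" using \<mu>_le i0(2) by force
    then show ?thesis
      unfolding val_def by (rule poly_hahn_mult_below_order[rotated]) (rule subst_bound)
  qed (simp add: poly_hahn_mult_def)
  have "i0 \<le> d" using i0(1) by (simp add: I_def)
  then have "(\<Sum>i\<le>d. poly_hahn_mult (P i) (hahn_subst F (\<alpha> ^ i)) \<mu>)
      = (\<Sum>i\<in>{i0}. poly_hahn_mult (P i) (hahn_subst F (\<alpha> ^ i)) \<mu>)"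
    using term_vanishes by (intro sum.mono_neutral_right) auto
  also have "\<dots> = poly_hahn_mult (P i0) (hahn_subst F (\<alpha> ^ i0)) \<mu>" by simp
  also have "\<dots> = coeff (P i0) (order 0 (P i0)) * hahn_subst F (\<alpha> ^ i0) (\<alpha> ^ i0 * v)"
    unfolding i0(2)[symmetric] val_def by (rule poly_hahn_mult_at_order) (rule subst_bound)
  also have "\<dots> = coeff (P i0) (order 0 (P i0)) * F v"
    using \<alpha>(2) by (simp add: hahn_subst_def)
  also have "\<dots> \<noteq> 0"
    using coeff_order_0_nonzero i0(1) Fv by (auto simp: I_def)
  finally show False using eq by simp
qed

lemma of_int_in_Zring: "of_int a \<in> Zring \<gamma>"
  unfolding Zring_def by (rule CollectI, rule exI[of _ 0], rule exI[of _ "\<lambda>_. a"]) simp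

lemma mult_indep_neq_1: "mult_indep \<alpha> \<beta> \<Longrightarrow> \<alpha> \<noteq> 1"
  by (auto simp: mult_indep_def)

lemma hahn_restrict_nonzero_imp_nonzero:
  "hahn_restrict A F \<noteq> (\<lambda>_. 0) \<Longrightarrow> \<exists>e. F e \<noteq> 0"
  by (auto simp: hahn_restrict_def)

theorem mainTheorem11:
  fixes K :: "complex set" and \<alpha> \<beta> :: real and F :: "real \<Rightarrow> complex"
    and P Q :: "nat \<Rightarrow> complex poly" and d1 d2 :: nat
  assumes K: "number_field K"
    and \<alpha>: "\<alpha> \<in> \<rat>" "\<alpha> > 0" and \<beta>: "\<beta> \<in> \<rat>" "\<beta> > 0"
    and indep: "mult_indep \<alpha> \<beta>"
    and F_hahn: "is_hahn_series F" and F_K: "\<forall>e. F e \<in> K"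
    and P_K: "\<forall>i\<le>d1. \<forall>k. coeff (P i) k \<in> K"
    and Q_K: "\<forall>i\<le>d2. \<forall>k. coeff (Q i) k \<in> K"
    and P_top: "P d1 \<noteq> 0" and Q_top: "Q d2 \<noteq> 0"
    and eqP: "\<forall>e. (\<Sum>i\<le>d1. poly_hahn_mult (P i) (hahn_subst F (\<alpha> ^ i)) e) = 0"
    and eqQ: "\<forall>e. (\<Sum>i\<le>d2. poly_hahn_mult (Q i) (hahn_subst F (\<beta> ^ i)) e) = 0"
    and s: "\<exists>s s'. hahn_restrict (shifted_orbit \<alpha> s) F \<noteq> (\<lambda>_. 0)
                 \<and> hahn_restrict (shifted_orbit \<beta> s') F \<noteq> (\<lambda>_. 0)"
  shows "\<exists>n::nat. n > 0 \<and>
           hahn_restrict (Zring \<alpha>) (hahn_subst F (real n)) \<noteq> (\<lambda>_. 0) \<and>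
           hahn_restrict (Zring \<beta>) (hahn_subst F (real n)) \<noteq> (\<lambda>_. 0)"
proof -
  from s obtain e where "F e \<noteq> 0" by (metis hahn_restrict_nonzero_imp_nonzero)
  with F_hahn obtain v where Fv: "F v \<noteq> 0" and v_least: "\<And>t. F t \<noteq> 0 \<Longrightarrow> v \<le> t"
    using hahn_series_least_exponent by blast
  have "v \<in> \<rat>"
    using least_exponent_rational[OF \<alpha> mult_indep_neq_1[OF indep] Fv v_least P_top eqP] .
  then obtain a b :: int where "b > 0" "v = of_int a / of_int b"
    by (rule Rats_cases')
  then have "hahn_subst F (real (nat b)) (of_int a) \<noteq> 0"
    using Fv by (simp add: hahn_subst_def)
  then have "hahn_restrict (Zring \<gamma>) (hahn_subst F (real (nat b))) \<noteq> (\<lambda>_. 0)" for \<gamma>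
    by (metis hahn_restrict_def of_int_in_Zring)
  with \<open>b > 0\<close> show ?thesis by (intro exI[of _ "nat b"]) simp
qed

end
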